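(* Let $D$ be an $S$-subalgebra of $\mathbb{C}\langle u,v\rangle$ containing $s_1=uv+vu$, and let $b\ge 1$, $c\ge 0$ be integers such that $p_{(b,c)}=u^bv^c+v^bu^c\in D$. Then $uvu^bv^c+vuv^bu^c\in D$ and $p_{(b+1,c+1)}=u^{b+1}v^{c+1}+v^{b+1}u^{c+1}\in D$. In particular, if $D$ contains $s_1$, then $D$ contains $s_a=u^av^a+v^au^a$ for every $a\ge 1$.
   Context: $\mathbb{C}\langle u,v\rangle$ is the free associative unital algebra over $\mathbb C$ on noncommuting $u,v$, with homogeneous components $\mathbb{C}\langle u,v\rangle^{(k)}$ of total degree $k$. For each $k$, $\mathrm{Sym}(k)$ acts on $\mathbb{C}\langle u,v\rangle^{(k)}$ by permuting positions: $(x_{i_1}\cdots x_{i_k})\circ\pi=x_{i_{\pi^{-1}(1)}}\cdots x_{i_{\pi^{-1}(k)}}$ for monomials with $x_{i_j}\in\{u,v\}$, extended linearly. An $S$-subalgebra is a graded unital subalgebra $F=\bigoplus_kF^{(k)}$ with $F^{(k)}\circ\mathrm{Sym}(k)=F^{(k)}$ for all $k$. *)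

theory Defs
  imports Complex_Main "HOL-Combinatorics.Permutations"
begin

text \<open>Elements of the free algebra C<u,v>: finitely supported coefficient functions on
words over the alphabet {u,v}; the letter u is True, v is False.\<close>

type_synonym ncpoly = "bool list \<Rightarrow> complex"

definition ncpolys :: "ncpoly set" where
  "ncpolys = {f. finite {w. f w \<noteq> 0}}"

definition nc_add :: "ncpoly \<Rightarrow> ncpoly \<Rightarrow> ncpoly" where
  "nc_add f g = (\<lambda>w. f w + g w)"

definition nc_smult :: "complex \<Rightarrow> ncpoly \<Rightarrow> ncpoly" where
  "nc_smult c f = (\<lambda>w. c * f w)"

definition nc_mult :: "ncpoly \<Rightarrow> ncpoly \<Rightarrow> ncpoly" where
  "nc_mult f g = (\<lambda>w. \<Sum>i\<le>length w. f (take i w) * g (drop i w))"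

definition nc_mon :: "bool list \<Rightarrow> ncpoly" where
  "nc_mon x = (\<lambda>w. if w = x then 1 else 0)"

abbreviation u_letter :: bool where "u_letter \<equiv> True"
abbreviation v_letter :: bool where "v_letter \<equiv> False"

definition nc_hom :: "nat \<Rightarrow> ncpoly \<Rightarrow> ncpoly" where
  "nc_hom k f = (\<lambda>w. if length w = k then f w else 0)"

definition homogeneous_of :: "nat \<Rightarrow> ncpoly \<Rightarrow> bool" where
  "homogeneous_of k f \<longleftrightarrow> (\<forall>w. length w \<noteq> k \<longrightarrow> f w = 0)"

text \<open>Action of pi in Sym(k) (permutations of positions 0..k-1) on degree-k elements:
  the monomial x_{i_1}...x_{i_k} goes to x_{i_{pi^{-1}(1)}}...x_{i_{pi^{-1}(k)}}, extended linearly.\<close>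
definition sym_act :: "nat \<Rightarrow> (nat \<Rightarrow> nat) \<Rightarrow> ncpoly \<Rightarrow> ncpoly" where
  "sym_act k \<pi> f = (\<lambda>w. if length w = k then f (map (\<lambda>i. w ! (\<pi> i)) [0..<k]) else 0)"

definition component :: "ncpoly set \<Rightarrow> nat \<Rightarrow> ncpoly set" where
  "component F k = {f \<in> F. homogeneous_of k f}"

definition unital_subalgebra :: "ncpoly set \<Rightarrow> bool" where
  "unital_subalgebra F \<longleftrightarrow> F \<subseteq> ncpolys \<and> nc_mon [] \<in> F \<and> (\<lambda>w. 0) \<in> F
     \<and> (\<forall>f\<in>F. \<forall>g\<in>F. nc_add f g \<in> F \<and> nc_mult f g \<in> F)
     \<and> (\<forall>c. \<forall>f\<in>F. nc_smult c f \<in> F)"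

definition graded :: "ncpoly set \<Rightarrow> bool" where
  "graded F \<longleftrightarrow> (\<forall>f\<in>F. \<forall>k. nc_hom k f \<in> F)"

definition S_subalgebra :: "ncpoly set \<Rightarrow> bool" where
  "S_subalgebra F \<longleftrightarrow> unital_subalgebra F \<and> graded F \<and>
     (\<forall>k. {sym_act k \<pi> f | f \<pi>. f \<in> component F k \<and> \<pi> permutes {..<k}} = component F k)"

definition uv_word :: "nat \<Rightarrow> nat \<Rightarrow> bool list" where
  "uv_word a b = replicate a u_letter @ replicate b v_letter"

definition vu_word :: "nat \<Rightarrow> nat \<Rightarrow> bool list" where
  "vu_word a b = replicate a v_letter @ replicate b u_letter"

definition p_poly :: "nat \<Rightarrow> nat \<Rightarrow> ncpoly" where
  "p_poly b c = nc_add (nc_mon (uv_word b c)) (nc_mon (vu_word b c))"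

definition s_poly :: "nat \<Rightarrow> ncpoly" where
  "s_poly a = p_poly a a"

end

theory Submission
  imports Defs
begin

(* Multiplying p(b,c) = u^b v^c + v^b u^c by s_1 = uv + vu gives the four words uv u^b v^c,
   vu u^b v^c, uv v^b u^c, vu v^b u^c of one degree. D is stable under permuting positions, so it
   also contains the images of this product under the transposition (0 2) and then (0 1); a linear
   combination of the three elements isolates uvu^b v^c + vuv^b u^c. Exchanging the v in position 1
   with the last u of the leading block of u's turns this into p(b+1,c+1), and induction from s_1
   yields every s_a. *)

lemma homogeneous_of_nc_mon: "homogeneous_of (length x) (nc_mon x)"
  by (simp add: homogeneous_of_def nc_mon_def)

lemma homogeneous_of_nc_add:
  "homogeneous_of k f \<Longrightarrow> homogeneous_of k g \<Longrightarrow> homogeneous_of k (nc_add f g)"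
  by (simp add: homogeneous_of_def nc_add_def)

lemma nc_mult_nc_mon: "nc_mult (nc_mon x) (nc_mon y) = nc_mon (x @ y)"
proof
  fix w
  have split_at: "take i w = x \<and> drop i w = y \<longleftrightarrow> i = length x \<and> w = x @ y"
    if "i \<le> length w" for i
  proof
    assume "take i w = x \<and> drop i w = y"
    moreover have "length (take i w) = i"
      using that by simp
    ultimately show "i = length x \<and> w = x @ y"
      using append_take_drop_id[of i w] by auto
  qed simp
  have "nc_mult (nc_mon x) (nc_mon y) w
      = (\<Sum>i\<le>length w. if i = length x then nc_mon (x @ y) w else 0)"
    unfolding nc_mult_def
  proof (rule sum.cong)
    fix i assume "i \<in> {..length w}"
    then show "nc_mon x (take i w) * nc_mon y (drop i w)
        = (if i = length x then nc_mon (x @ y) w else 0)"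
      using split_at[of i] unfolding nc_mon_def by (cases "take i w = x \<and> drop i w = y") auto
  qed simp
  also have "\<dots> = nc_mon (x @ y) w"
    by (simp add: nc_mon_def)
  finally show "nc_mult (nc_mon x) (nc_mon y) w = nc_mon (x @ y) w" .
qed

lemma nc_mult_nc_add_left: "nc_mult (nc_add f g) h = nc_add (nc_mult f h) (nc_mult g h)"
  by (simp add: nc_mult_def nc_add_def distrib_right sum.distrib)

lemma nc_mult_nc_add_right: "nc_mult h (nc_add f g) = nc_add (nc_mult h f) (nc_mult h g)"
  by (simp add: nc_mult_def nc_add_def distrib_left sum.distrib)

lemma sym_act_nc_add: "sym_act k \<pi> (nc_add f g) = nc_add (sym_act k \<pi> f) (sym_act k \<pi> g)"
  by (auto simp: sym_act_def nc_add_def)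

lemma sym_act_nc_mon:
  assumes "\<pi> permutes {..<length x}"
  shows "sym_act (length x) \<pi> (nc_mon x) = nc_mon (permute_list (inv \<pi>) x)"
proof
  fix w
  have inv_perm: "inv \<pi> permutes {..<length x}"
    using assms by (rule permutes_inv)
  show "sym_act (length x) \<pi> (nc_mon x) w = nc_mon (permute_list (inv \<pi>) x) w"
  proof (cases "length w = length x")
    case False
    then show ?thesis
      by (auto simp: sym_act_def nc_mon_def)
  next
    case True
    have "map (\<lambda>i. w ! \<pi> i) [0..<length x] = permute_list \<pi> w"
      using True by (simp add: permute_list_def)
    moreover have "permute_list \<pi> w = x \<longleftrightarrow> w = permute_list (inv \<pi>) x"
    proof
      assume "permute_list \<pi> w = x"
      then have "permute_list (inv \<pi>) x = permute_list (\<pi> \<circ> inv \<pi>) w"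
        using inv_perm True by (simp add: permute_list_compose)
      then show "w = permute_list (inv \<pi>) x"
        using assms by (simp add: permutes_inv_o)
    next
      assume "w = permute_list (inv \<pi>) x"
      then show "permute_list \<pi> w = x"
        using assms by (simp add: permute_list_compose[symmetric] permutes_inv_o)
    qed
    ultimately show ?thesis
      using True by (simp add: sym_act_def nc_mon_def)
  qed
qed

lemma permute_list_transpose:
  assumes "i < length xs" "j < length xs"
  shows "permute_list (transpose i j) xs = xs[i := xs ! j, j := xs ! i]"
  using assms by (intro nth_equalityI) (auto simp: permute_list_def nth_list_update transpose_def)

lemma sym_act_transpose_nc_mon:
  assumes "length x = k" "i < k" "j < k"
  shows "sym_act k (transpose i j) (nc_mon x) = nc_mon (x[i := x ! j, j := x ! i])"
  using assms by (auto simp: sym_act_nc_mon permutes_swap_id permute_list_transpose)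

lemma S_subalgebra_nc_add: "S_subalgebra D \<Longrightarrow> f \<in> D \<Longrightarrow> g \<in> D \<Longrightarrow> nc_add f g \<in> D"
  by (simp add: S_subalgebra_def unital_subalgebra_def)

lemma S_subalgebra_nc_mult: "S_subalgebra D \<Longrightarrow> f \<in> D \<Longrightarrow> g \<in> D \<Longrightarrow> nc_mult f g \<in> D"
  by (simp add: S_subalgebra_def unital_subalgebra_def)

lemma S_subalgebra_nc_smult: "S_subalgebra D \<Longrightarrow> f \<in> D \<Longrightarrow> nc_smult c f \<in> D"
  by (simp add: S_subalgebra_def unital_subalgebra_def)

lemma S_subalgebra_sym_act:
  assumes "S_subalgebra D" "f \<in> D" "homogeneous_of k f" "\<pi> permutes {..<k}"
  shows "sym_act k \<pi> f \<in> D"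
proof -
  have "sym_act k \<pi> f \<in> {sym_act k \<pi> f | f \<pi>. f \<in> component D k \<and> \<pi> permutes {..<k}}"
    using assms by (auto simp: component_def)
  also have "\<dots> = component D k"
    using assms(1) by (simp add: S_subalgebra_def)
  finally show ?thesis
    by (simp add: component_def)
qed

lemma S_subalgebra_transpose_binomial:
  assumes D: "S_subalgebra D" and xy: "nc_add (nc_mon x) (nc_mon y) \<in> D"
    and "length y = length x" "i < length x" "j < length x"
  shows "nc_add (nc_mon (x[i := x ! j, j := x ! i])) (nc_mon (y[i := y ! j, j := y ! i])) \<in> D"
proof -
  have "homogeneous_of (length x) (nc_add (nc_mon x) (nc_mon y))"
    using assms homogeneous_of_nc_mon by (metis homogeneous_of_nc_add)
  then show ?thesis
    using S_subalgebra_sym_act[OF D xy, of "length x" "transpose i j"] assms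
    by (simp add: permutes_swap_id sym_act_nc_add sym_act_transpose_nc_mon)
qed

lemma S_subalgebra_uvu_vuv:
  assumes D: "S_subalgebra D" and s1: "s_poly 1 \<in> D"
    and p: "nc_add (nc_mon (u_letter # x)) (nc_mon (v_letter # y)) \<in> D"
    and len: "length y = length x"
  shows "nc_add (nc_mon (u_letter # v_letter # u_letter # x))
                (nc_mon (v_letter # u_letter # v_letter # y)) \<in> D"
proof -
  define k where "k = length x + 3"
  define A where "A = u_letter # v_letter # u_letter # x"
  define B where "B = u_letter # v_letter # v_letter # y"
  define C where "C = v_letter # u_letter # u_letter # x"
  define E where "E = v_letter # u_letter # v_letter # y"
  define B' where "B' = v_letter # v_letter # u_letter # y"
  define C' where "C' = u_letter # u_letter # v_letter # x"
  have lengths: "length A = k" "length B = k" "length C = k" "length E = k"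
      "length B' = k" "length C' = k"
    using len by (simp_all add: k_def A_def B_def C_def E_def B'_def C'_def)
  have hom: "homogeneous_of k (nc_mon w)" if "length w = k" for w
    using that homogeneous_of_nc_mon by blast
  define f where "f = nc_add (nc_add (nc_mon A) (nc_mon C)) (nc_add (nc_mon B) (nc_mon E))"
  define g where "g = nc_add (nc_add (nc_mon A) (nc_mon C')) (nc_add (nc_mon B') (nc_mon E))"
  define h where "h = nc_add (nc_add (nc_mon C) (nc_mon C')) (nc_add (nc_mon B') (nc_mon B))"
  have "nc_mult (s_poly 1) (nc_add (nc_mon (u_letter # x)) (nc_mon (v_letter # y))) = f"
    by (simp add: f_def A_def B_def C_def E_def s_poly_def p_poly_def uv_word_def vu_word_def
        nc_mult_nc_add_left nc_mult_nc_add_right nc_mult_nc_mon)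
  then have f_in: "f \<in> D"
    using S_subalgebra_nc_mult[OF D s1 p] by simp
  have "sym_act k (transpose 0 2) f = g"
    using lengths by (simp add: f_def g_def sym_act_nc_add sym_act_transpose_nc_mon k_def
        A_def B_def C_def E_def B'_def C'_def)
  moreover have "homogeneous_of k f"
    unfolding f_def using lengths by (intro homogeneous_of_nc_add hom)
  ultimately have g_in: "g \<in> D"
    using S_subalgebra_sym_act[OF D f_in, of k "transpose 0 2"] by (simp add: permutes_swap_id k_def)
  have "sym_act k (transpose 0 1) g = h"
    using lengths by (simp add: g_def h_def sym_act_nc_add sym_act_transpose_nc_mon k_def
        A_def B_def C_def E_def B'_def C'_def)
  moreover have "homogeneous_of k g"
    unfolding g_def using lengths by (intro homogeneous_of_nc_add hom)
  ultimately have h_in: "h \<in> D"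
    using S_subalgebra_sym_act[OF D g_in, of k "transpose 0 1"] by (simp add: permutes_swap_id k_def)
  \<comment> \<open>(0 2) fixes A and E, and (0 1) then moves them to C and B, so f + g - h = 2 (A + E).\<close>
  have "nc_smult (1/2) (nc_add (nc_add f g) (nc_smult (-1) h)) = nc_add (nc_mon A) (nc_mon E)"
    by (simp add: fun_eq_iff nc_smult_def nc_add_def f_def g_def h_def algebra_simps)
  moreover have "nc_smult (1/2) (nc_add (nc_add f g) (nc_smult (-1) h)) \<in> D"
    by (intro S_subalgebra_nc_smult S_subalgebra_nc_add D f_in g_in h_in)
  ultimately show ?thesis
    by (simp add: A_def E_def)
qed

lemma S_subalgebra_uv_prefix_p_poly:
  assumes D: "S_subalgebra D" and s1: "s_poly 1 \<in> D" and "b \<ge> 1" and p: "p_poly b c \<in> D"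
  shows "nc_add (nc_mon ([u_letter, v_letter] @ uv_word b c))
                (nc_mon ([v_letter, u_letter] @ vu_word b c)) \<in> D"
proof -
  obtain n where b: "b = Suc n"
    using \<open>b \<ge> 1\<close> by (cases b) auto
  have "nc_add (nc_mon (u_letter # uv_word n c)) (nc_mon (v_letter # vu_word n c)) \<in> D"
    using p by (simp add: b p_poly_def uv_word_def vu_word_def)
  from S_subalgebra_uvu_vuv[OF D s1 this] show ?thesis
    by (simp add: b uv_word_def vu_word_def)
qed

lemma list_update_swap_into_replicate:
  "(x # y # replicate (Suc n) x @ zs)[1 := x, Suc (Suc n) := y] = replicate (Suc (Suc n)) x @ y # zs"
  by (induction n) auto

lemma S_subalgebra_p_poly_Suc_Suc:
  assumes D: "S_subalgebra D" and s1: "s_poly 1 \<in> D" and "b \<ge> 1" and p: "p_poly b c \<in> D"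
  shows "p_poly (b + 1) (c + 1) \<in> D"
proof -
  obtain n where b: "b = Suc n"
    using \<open>b \<ge> 1\<close> by (cases b) auto
  define x where "x = [u_letter, v_letter] @ uv_word b c"
  define y where "y = [v_letter, u_letter] @ vu_word b c"
  have "nc_add (nc_mon x) (nc_mon y) \<in> D"
    using S_subalgebra_uv_prefix_p_poly[OF assms] by (simp add: x_def y_def)
  from S_subalgebra_transpose_binomial[OF D this, of 1 "b + 1"]
  have "nc_add (nc_mon (x[1 := x ! (b + 1), b + 1 := x ! 1]))
               (nc_mon (y[1 := y ! (b + 1), b + 1 := y ! 1])) \<in> D"
    by (simp add: x_def y_def uv_word_def vu_word_def)
  moreover have "x[1 := x ! (b + 1), b + 1 := x ! 1] = uv_word (b + 1) (c + 1)"
    using list_update_swap_into_replicate[of u_letter v_letter n]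
    by (simp add: x_def b uv_word_def nth_append flip: replicate_Suc)
  moreover have "y[1 := y ! (b + 1), b + 1 := y ! 1] = vu_word (b + 1) (c + 1)"
    using list_update_swap_into_replicate[of v_letter u_letter n]
    by (simp add: y_def b vu_word_def nth_append flip: replicate_Suc)
  ultimately show ?thesis
    by (simp add: p_poly_def)
qed

lemma S_subalgebra_s_poly:
  assumes D: "S_subalgebra D" and s1: "s_poly 1 \<in> D" and "a \<ge> 1"
  shows "s_poly a \<in> D"
  using \<open>a \<ge> 1\<close>
proof (induction a rule: dec_induct)
  case base
  show ?case using s1 .
next
  case (step a)
  then show ?case
    using S_subalgebra_p_poly_Suc_Suc[OF D s1, of a a] by (simp add: s_poly_def)
qed

theorem mainTheorem4:
  fixes D :: "ncpoly set" and b c :: nat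
  assumes "S_subalgebra D"
    and "s_poly 1 \<in> D"
    and "b \<ge> 1"
    and "p_poly b c \<in> D"
  shows "nc_add (nc_mon ([u_letter, v_letter] @ uv_word b c))
                (nc_mon ([v_letter, u_letter] @ vu_word b c)) \<in> D
       \<and> p_poly (b + 1) (c + 1) \<in> D
       \<and> (\<forall>a\<ge>1. s_poly a \<in> D)"
  using S_subalgebra_uv_prefix_p_poly[OF assms] S_subalgebra_p_poly_Suc_Suc[OF assms]
    S_subalgebra_s_poly[OF assms(1,2)] by blast

end
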